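(* Let $U$ be a finite set of men and $W_1\subseteq W_2$ finite sets of women with $|W_1|\le|W_2|=|U|$, each man having a strict total order over $W_2$ and each woman a strict total order over $U$. Let $M_1'$ be a stable matching of $(U,W_1)$ and $M_2$ a stable matching of $(U,W_2)$. Define $M_2'$ as the union of: the pairs of $M_1'\cap M_2$; for each path component of $G(M_1',M_2)$, its edges belonging to $M_2$; for each cycle of $G(M_1',M_2)$ of Type I, its edges belonging to $M_2$; for each cycle of $G(M_1',M_2)$ of Type II, its edges belonging to $M_1'$. Then $M_2'$ is a perfect matching between $U$ and $W_2$ and it is stable for the instance $(U,W_2)$.
   Context: A matching is a set of man–woman pairs with each person in at most one pair; a blocking pair of $M$ is a pair $(u,w)\notin M$ with ($u$ unmatched or preferring $w$ to his partner) and ($w$ unmatched or preferring $u$ to her partner); a matching is stable if it has no blocking pair. Preferences in a sub-instance are restrictions of the given ones. The difference graph $G(M,M')$ has vertex set $U\cup W_2$ and edge set $M\triangle M'$. A cycle $C$ of $G(M_1',M_2)$ is of Type I if every man in $C$ strictly prefers his partner in $M_2$ to his partner in $M_1'$ and every woman in $C$ strictly prefers her partner in $M_1'$ to her partner in $M_2$; it is of Type II if every man in $C$ strictly prefers his partner in $M_1'$ to his partner in $M_2$ and every woman in $C$ strictly prefers her partner in $M_2$ to her partner in $M_1'$ (every cycle is of one of these types). *)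

theory Defs
  imports Main
begin

(* Preferences:  (w, w') \<in> PM u  means man u strictly prefers
   woman w to woman w';  (u, u') \<in> PW w  means woman w strictly prefers u to u'. *)

definition is_matching :: "'m set \<Rightarrow> 'w set \<Rightarrow> ('m \<times> 'w) set \<Rightarrow> bool" where
  "is_matching U W M \<longleftrightarrow> M \<subseteq> U \<times> W \<and>
     (\<forall>u w w'. (u, w) \<in> M \<longrightarrow> (u, w') \<in> M \<longrightarrow> w = w') \<and>
     (\<forall>u u' w. (u, w) \<in> M \<longrightarrow> (u', w) \<in> M \<longrightarrow> u = u')"

definition blocking_pair ::
  "('m \<Rightarrow> ('w \<times> 'w) set) \<Rightarrow> ('w \<Rightarrow> ('m \<times> 'm) set) \<Rightarrow> ('m \<times> 'w) set \<Rightarrow> 'm \<Rightarrow> 'w \<Rightarrow> bool" where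
  "blocking_pair PM PW M u w \<longleftrightarrow> (u, w) \<notin> M \<and>
     ((\<nexists>w'. (u, w') \<in> M) \<or> (\<exists>w'. (u, w') \<in> M \<and> (w, w') \<in> PM u)) \<and>
     ((\<nexists>u'. (u', w) \<in> M) \<or> (\<exists>u'. (u', w) \<in> M \<and> (u, u') \<in> PW w))"

(* stable matching of the sub-instance (U, W); preferences are the given ones
   restricted to U and W (only pairs in U \<times> W are considered) *)
definition stable_matching ::
  "('m \<Rightarrow> ('w \<times> 'w) set) \<Rightarrow> ('w \<Rightarrow> ('m \<times> 'm) set) \<Rightarrow> 'm set \<Rightarrow> 'w set \<Rightarrow> ('m \<times> 'w) set \<Rightarrow> bool" where
  "stable_matching PM PW U W M \<longleftrightarrow> is_matching U W M \<and>
     (\<forall>u\<in>U. \<forall>w\<in>W. \<not> blocking_pair PM PW M u w)"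

definition perfect_matching :: "'m set \<Rightarrow> 'w set \<Rightarrow> ('m \<times> 'w) set \<Rightarrow> bool" where
  "perfect_matching U W M \<longleftrightarrow> is_matching U W M \<and>
     (\<forall>u\<in>U. \<exists>w. (u, w) \<in> M) \<and> (\<forall>w\<in>W. \<exists>u. (u, w) \<in> M)"

definition diff_edges :: "('m \<times> 'w) set \<Rightarrow> ('m \<times> 'w) set \<Rightarrow> ('m \<times> 'w) set" where
  "diff_edges M M' = (M - M') \<union> (M' - M)"

definition edge_adj :: "('m \<times> 'w) set \<Rightarrow> (('m \<times> 'w) \<times> ('m \<times> 'w)) set" where
  "edge_adj D = {(a, b). a \<in> D \<and> b \<in> D \<and> (fst a = fst b \<or> snd a = snd b)}"

definition component :: "('m \<times> 'w) set \<Rightarrow> 'm \<times> 'w \<Rightarrow> ('m \<times> 'w) set" where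
  "component D e = {e' \<in> D. (e, e') \<in> (edge_adj D)\<^sup>*}"

(* A component (given by its edge set C) is a cycle iff every vertex of it has degree 2
   in the graph with edge set D; otherwise (all degrees being \<le> 2 in a difference
   graph of two matchings) it is a path. *)
definition is_cycle_comp :: "('m \<times> 'w) set \<Rightarrow> ('m \<times> 'w) set \<Rightarrow> bool" where
  "is_cycle_comp D C \<longleftrightarrow> (\<forall>u \<in> fst ` C. card {w. (u, w) \<in> D} = 2) \<and>
                          (\<forall>w \<in> snd ` C. card {u. (u, w) \<in> D} = 2)"

definition typeI ::
  "('m \<Rightarrow> ('w \<times> 'w) set) \<Rightarrow> ('w \<Rightarrow> ('m \<times> 'm) set) \<Rightarrow> ('m \<times> 'w) set \<Rightarrow> ('m \<times> 'w) set
     \<Rightarrow> ('m \<times> 'w) set \<Rightarrow> bool" where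
  "typeI PM PW M1 M2 C \<longleftrightarrow>
     (\<forall>u \<in> fst ` C. \<forall>w1 w2. (u, w1) \<in> M1 \<longrightarrow> (u, w2) \<in> M2 \<longrightarrow> (w2, w1) \<in> PM u) \<and>
     (\<forall>w \<in> snd ` C. \<forall>u1 u2. (u1, w) \<in> M1 \<longrightarrow> (u2, w) \<in> M2 \<longrightarrow> (u1, u2) \<in> PW w)"

definition typeII ::
  "('m \<Rightarrow> ('w \<times> 'w) set) \<Rightarrow> ('w \<Rightarrow> ('m \<times> 'm) set) \<Rightarrow> ('m \<times> 'w) set \<Rightarrow> ('m \<times> 'w) set
     \<Rightarrow> ('m \<times> 'w) set \<Rightarrow> bool" where
  "typeII PM PW M1 M2 C \<longleftrightarrow>
     (\<forall>u \<in> fst ` C. \<forall>w1 w2. (u, w1) \<in> M1 \<longrightarrow> (u, w2) \<in> M2 \<longrightarrow> (w1, w2) \<in> PM u) \<and>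
     (\<forall>w \<in> snd ` C. \<forall>u1 u2. (u1, w) \<in> M1 \<longrightarrow> (u2, w) \<in> M2 \<longrightarrow> (u2, u1) \<in> PW w)"

(* M2' built from M1' (= M1) and M2 *)
definition combine ::
  "('m \<Rightarrow> ('w \<times> 'w) set) \<Rightarrow> ('w \<Rightarrow> ('m \<times> 'm) set) \<Rightarrow> ('m \<times> 'w) set \<Rightarrow> ('m \<times> 'w) set
     \<Rightarrow> ('m \<times> 'w) set" where
  "combine PM PW M1 M2 =
     (let D = diff_edges M1 M2 in
       (M1 \<inter> M2)
       \<union> {e \<in> M2 - M1. \<not> is_cycle_comp D (component D e)}
       \<union> {e \<in> M2 - M1. is_cycle_comp D (component D e) \<and> typeI PM PW M1 M2 (component D e)}
       \<union> {e \<in> M1 - M2. is_cycle_comp D (component D e) \<and> typeII PM PW M1 M2 (component D e)})"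

end

theory Submission
  imports Defs
begin

text \<open>Let \<open>T\<close> be the set of men who strictly prefer their \<open>M\<^sub>1'\<close>-partner to their
  \<open>M\<^sub>2\<close>-partner. Stability of both matchings forces every \<open>M\<^sub>2\<close>-partner of a woman whose
  \<open>M\<^sub>1'\<close>-partner lies in \<open>T\<close> to lie in \<open>T\<close> as well; counting then shows that the men of \<open>T\<close> have
  the same set of partners in both matchings. Hence \<open>T\<close> is a union of components of the
  difference graph: those components are cycles of Type II, all others are of Type I, and
  \<open>M\<^sub>2'\<close> gives every man the better of his two partners, namely his \<open>M\<^sub>1'\<close>-partner on \<open>T\<close> and his
  \<open>M\<^sub>2\<close>-partner elsewhere. A pair blocking \<open>M\<^sub>2'\<close> would then block \<open>M\<^sub>2\<close> or \<open>M\<^sub>1'\<close>.\<close>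

lemma is_matching_man_unique:
  "is_matching U W M \<Longrightarrow> (u, w) \<in> M \<Longrightarrow> (u, w') \<in> M \<Longrightarrow> w = w'"
  unfolding is_matching_def by blast

lemma is_matching_woman_unique:
  "is_matching U W M \<Longrightarrow> (u, w) \<in> M \<Longrightarrow> (u', w) \<in> M \<Longrightarrow> u = u'"
  unfolding is_matching_def by blast

lemma is_matching_inj_on_fst: "is_matching U W M \<Longrightarrow> inj_on fst M"
  by (auto simp: inj_on_def dest: is_matching_man_unique)

lemma is_matching_inj_on_snd: "is_matching U W M \<Longrightarrow> inj_on snd M"
  by (auto simp: inj_on_def dest: is_matching_woman_unique)

lemma is_matching_mono:
  "is_matching U W M \<Longrightarrow> W \<subseteq> W' \<Longrightarrow> is_matching U W' M"
  unfolding is_matching_def by blast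

lemma card_Image_matching:
  assumes "is_matching U W M" and "X \<subseteq> Domain M"
  shows "card (M `` X) = card X"
proof -
  let ?N = "M \<inter> X \<times> UNIV"
  have "inj_on fst ?N" and "inj_on snd ?N"
    using is_matching_inj_on_fst[OF assms(1)] is_matching_inj_on_snd[OF assms(1)]
    by (auto intro: inj_on_subset)
  moreover have "M `` X = snd ` ?N" and "X = fst ` ?N"
    using assms(2) by force+
  ultimately show ?thesis
    by (metis card_image)
qed

lemma stable_matching_perfect:
  assumes "finite U" and "finite W" and "card W = card U"
    and stable: "stable_matching PM PW U W M"
  shows "perfect_matching U W M"
proof -
  have M: "is_matching U W M"
    using stable unfolding stable_matching_def by blast
  have sub: "Domain M \<subseteq> U" "Range M \<subseteq> W"
    using M unfolding is_matching_def by blast+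
  have "card (Domain M) = card (Range M)"
    using is_matching_inj_on_fst[OF M] is_matching_inj_on_snd[OF M]
    by (simp add: Domain_fst Range_snd card_image)
  then have "Domain M = U \<longleftrightarrow> Range M = W"
    using sub assms(1-3) by (metis card_subset_eq)
  moreover have "Domain M = U \<or> Range M = W"
  proof (rule ccontr)
    assume "\<not> (Domain M = U \<or> Range M = W)"
    then obtain u w where "u \<in> U" "u \<notin> Domain M" "w \<in> W" "w \<notin> Range M"
      using sub by blast
    then have "blocking_pair PM PW M u w"
      unfolding blocking_pair_def by blast
    with stable \<open>u \<in> U\<close> \<open>w \<in> W\<close> show False
      unfolding stable_matching_def by blast
  qed
  ultimately show ?thesis
    using M unfolding perfect_matching_def by blast
qed

definition merge_on :: "'m set \<Rightarrow> ('m \<times> 'w) set \<Rightarrow> ('m \<times> 'w) set \<Rightarrow> ('m \<times> 'w) set" where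
  "merge_on T M1 M2 = {e \<in> M1. fst e \<in> T} \<union> {e \<in> M2. fst e \<notin> T}"

lemma merge_on_iff:
  "(u, w) \<in> merge_on T M1 M2 \<longleftrightarrow> (u, w) \<in> M1 \<and> u \<in> T \<or> (u, w) \<in> M2 \<and> u \<notin> T"
  unfolding merge_on_def by auto

lemma perfect_matching_merge_on:
  assumes M1: "is_matching U W M1" and M2: "perfect_matching U W M2"
    and same_partners: "M1 `` T = M2 `` T" and "T \<subseteq> Domain M1"
  shows "perfect_matching U W (merge_on T M1 M2)"
proof -
  let ?M = "merge_on T M1 M2"
  have M2': "is_matching U W M2"
    using M2 unfolding perfect_matching_def by blast
  have mixed: False if "(u, w) \<in> M2" "u \<notin> T" "(u', w) \<in> M1" "u' \<in> T" for u u' w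
  proof -
    from that(3,4) have "w \<in> M2 `` T"
      using same_partners by blast
    then show False
      using that(1,2) is_matching_woman_unique[OF M2'] by blast
  qed
  have "?M \<subseteq> M1 \<union> M2"
    unfolding merge_on_def by blast
  then have "?M \<subseteq> U \<times> W"
    using M1 M2' unfolding is_matching_def by blast
  moreover have "w = w'" if "(u, w) \<in> ?M" "(u, w') \<in> ?M" for u w w'
    using that is_matching_man_unique[OF M1] is_matching_man_unique[OF M2']
    unfolding merge_on_iff by blast
  moreover have "u = u'" if "(u, w) \<in> ?M" "(u', w) \<in> ?M" for u u' w
    using that mixed is_matching_woman_unique[OF M1] is_matching_woman_unique[OF M2']
    unfolding merge_on_iff by metis
  moreover have "\<exists>w. (u, w) \<in> ?M" if "u \<in> U" for u
    using M2 that \<open>T \<subseteq> Domain M1\<close> unfolding perfect_matching_def merge_on_iff by blast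
  moreover have "\<exists>u. (u, w) \<in> ?M" if "w \<in> W" for w
  proof -
    obtain u where u: "(u, w) \<in> M2"
      using M2 \<open>w \<in> W\<close> unfolding perfect_matching_def by blast
    show ?thesis
    proof (cases "u \<in> T")
      case True
      then have "w \<in> M1 `` T"
        using u same_partners by blast
      then show ?thesis
        unfolding merge_on_iff by blast
    next
      case False
      with u show ?thesis
        unfolding merge_on_iff by blast
    qed
  qed
  ultimately show ?thesis
    unfolding perfect_matching_def is_matching_def by blast
qed

locale two_stable_matchings =
  fixes U :: "'m set" and W1 W2 :: "'w set"
    and PM :: "'m \<Rightarrow> ('w \<times> 'w) set" and PW :: "'w \<Rightarrow> ('m \<times> 'm) set"
    and M1 M2 :: "('m \<times> 'w) set"
  assumes finite_W2: "finite W2" and W1_subset: "W1 \<subseteq> W2"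
    and PM_order: "\<And>u. u \<in> U \<Longrightarrow> strict_linear_order_on W2 (PM u)"
    and PW_order: "\<And>w. w \<in> W2 \<Longrightarrow> strict_linear_order_on U (PW w)"
    and stable1: "stable_matching PM PW U W1 M1"
    and stable2: "stable_matching PM PW U W2 M2"
    and perfect2: "perfect_matching U W2 M2"
begin

lemma PM_irrefl: "u \<in> U \<Longrightarrow> (a, a) \<notin> PM u"
  using PM_order unfolding strict_linear_order_on_def irrefl_def by blast

lemma PM_asym: "u \<in> U \<Longrightarrow> (a, b) \<in> PM u \<Longrightarrow> (b, a) \<notin> PM u"
  using PM_order unfolding strict_linear_order_on_def irrefl_def trans_def by blast

lemma PM_trans: "u \<in> U \<Longrightarrow> (a, b) \<in> PM u \<Longrightarrow> (b, c) \<in> PM u \<Longrightarrow> (a, c) \<in> PM u"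
  using PM_order unfolding strict_linear_order_on_def trans_def by blast

lemma PM_total:
  "u \<in> U \<Longrightarrow> a \<in> W2 \<Longrightarrow> b \<in> W2 \<Longrightarrow> a \<noteq> b \<Longrightarrow> (a, b) \<in> PM u \<or> (b, a) \<in> PM u"
  using PM_order unfolding strict_linear_order_on_def total_on_def by blast

lemma PW_asym: "w \<in> W2 \<Longrightarrow> (a, b) \<in> PW w \<Longrightarrow> (b, a) \<notin> PW w"
  using PW_order unfolding strict_linear_order_on_def irrefl_def trans_def by blast

lemma PW_total:
  "w \<in> W2 \<Longrightarrow> a \<in> U \<Longrightarrow> b \<in> U \<Longrightarrow> a \<noteq> b \<Longrightarrow> (a, b) \<in> PW w \<or> (b, a) \<in> PW w"
  using PW_order unfolding strict_linear_order_on_def total_on_def by blast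

lemma M1_matching: "is_matching U W2 M1"
  using stable1 W1_subset is_matching_mono unfolding stable_matching_def by blast

lemma M2_matching: "is_matching U W2 M2"
  using stable2 unfolding stable_matching_def by blast

lemmas M1_man_unique = is_matching_man_unique[OF M1_matching]
lemmas M1_woman_unique = is_matching_woman_unique[OF M1_matching]
lemmas M2_man_unique = is_matching_man_unique[OF M2_matching]
lemmas M2_woman_unique = is_matching_woman_unique[OF M2_matching]

lemma M1_in: "(u, w) \<in> M1 \<Longrightarrow> u \<in> U \<and> w \<in> W1"
  using stable1 unfolding stable_matching_def is_matching_def by blast

lemma M2_in: "(u, w) \<in> M2 \<Longrightarrow> u \<in> U \<and> w \<in> W2"
  using M2_matching unfolding is_matching_def by blast

lemma M2_man_matched: "u \<in> U \<Longrightarrow> \<exists>w. (u, w) \<in> M2"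
  using perfect2 unfolding perfect_matching_def by blast

lemma M2_woman_matched: "w \<in> W2 \<Longrightarrow> \<exists>u. (u, w) \<in> M2"
  using perfect2 unfolding perfect_matching_def by blast

lemma not_blocking1: "u \<in> U \<Longrightarrow> w \<in> W1 \<Longrightarrow> \<not> blocking_pair PM PW M1 u w"
  using stable1 unfolding stable_matching_def by blast

lemma not_blocking2: "u \<in> U \<Longrightarrow> w \<in> W2 \<Longrightarrow> \<not> blocking_pair PM PW M2 u w"
  using stable2 unfolding stable_matching_def by blast

definition M1_preferring :: "'m set" where
  "M1_preferring = {u \<in> U. \<exists>w1 w2. (u, w1) \<in> M1 \<and> (u, w2) \<in> M2 \<and> (w1, w2) \<in> PM u}"

abbreviation T where "T \<equiv> M1_preferring"

lemma M1_preferring_prefers: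
  "u \<in> T \<Longrightarrow> (u, w1) \<in> M1 \<Longrightarrow> (u, w2) \<in> M2 \<Longrightarrow> (w1, w2) \<in> PM u"
  unfolding M1_preferring_def using M1_man_unique M2_man_unique by blast

lemma M1_preferring_partners_differ:
  "u \<in> T \<Longrightarrow> (u, w) \<in> M1 \<Longrightarrow> (u, w) \<notin> M2"
  using M1_preferring_prefers PM_irrefl M1_in by blast

lemma not_M1_preferring_prefers:
  assumes "u \<notin> T" "(u, w1) \<in> M1" "(u, w2) \<in> M2" "w1 \<noteq> w2"
  shows "(w2, w1) \<in> PM u"
  using assms PM_total[of u w1 w2] M1_in M2_in W1_subset
  unfolding M1_preferring_def by blast

lemma woman_prefers_M2_partner_of_M1_preferring:
  assumes "u1 \<in> T" "(u1, w) \<in> M1" "(u2, w) \<in> M2"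
  shows "(u2, u1) \<in> PW w"
proof (rule ccontr)
  assume not_pref: "(u2, u1) \<notin> PW w"
  obtain w2 where w2: "(u1, w2) \<in> M2" and pref: "(w, w2) \<in> PM u1"
    using assms(1,2) M1_preferring_prefers unfolding M1_preferring_def by blast
  have "u1 \<noteq> u2"
    using assms M1_preferring_partners_differ by blast
  then have "(u1, u2) \<in> PW w"
    using not_pref PW_total[of w u1 u2] M1_in M2_in assms(2,3) by blast
  then have "blocking_pair PM PW M2 u1 w"
    using w2 pref assms(2,3) M1_preferring_partners_differ[OF assms(1,2)]
    unfolding blocking_pair_def by blast
  then show False
    using not_blocking2 M2_in assms(3) w2 by blast
qed

lemma woman_prefers_M1_partner_of_other:
  assumes "u2 \<notin> T" "(u1, w) \<in> M1" "(u2, w) \<in> M2" "u1 \<noteq> u2"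
  shows "(u1, u2) \<in> PW w"
proof (rule ccontr)
  assume not_pref: "(u1, u2) \<notin> PW w"
  have "(u2, u1) \<in> PW w"
    using not_pref PW_total[of w u1 u2] M1_in M2_in assms by blast
  moreover have "(u2, w) \<notin> M1"
    using assms(2,4) M1_woman_unique by blast
  moreover have "(\<nexists>w'. (u2, w') \<in> M1) \<or> (\<exists>w'. (u2, w') \<in> M1 \<and> (w, w') \<in> PM u2)"
    using not_M1_preferring_prefers[OF assms(1) _ assms(3)] \<open>(u2, w) \<notin> M1\<close> by blast
  ultimately have "blocking_pair PM PW M1 u2 w"
    using assms(2) unfolding blocking_pair_def by blast
  then show False
    using not_blocking1 M1_in M2_in assms(2,3) by blast
qed

lemma M2_partner_M1_preferring:
  assumes "v \<in> T" "(v, w) \<in> M1" "(u, w) \<in> M2"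
  shows "u \<in> T"
proof (rule ccontr)
  assume "u \<notin> T"
  have "(u, v) \<in> PW w"
    using woman_prefers_M2_partner_of_M1_preferring assms by blast
  moreover have "u \<noteq> v"
    using assms M1_preferring_partners_differ by blast
  ultimately show False
    using woman_prefers_M1_partner_of_other[OF \<open>u \<notin> T\<close> assms(2,3)] PW_asym M2_in assms(3)
    by blast
qed

text \<open>The inclusion \<open>\<subseteq>\<close> is the previous lemma; equality follows because both sides have
  \<open>|T|\<close> elements.\<close>

lemma M1_preferring_same_partners: "M1 `` T = M2 `` T"
proof -
  have dom: "T \<subseteq> Domain M1" "T \<subseteq> Domain M2"
    unfolding M1_preferring_def by blast+
  have sub: "M1 `` T \<subseteq> M2 `` T"
  proof
    fix w assume "w \<in> M1 `` T"
    then obtain v where "v \<in> T" "(v, w) \<in> M1" by blast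
    moreover obtain u where "(u, w) \<in> M2"
      using M2_woman_matched M1_in W1_subset \<open>(v, w) \<in> M1\<close> by blast
    ultimately show "w \<in> M2 `` T"
      using M2_partner_M1_preferring by blast
  qed
  have "finite (M2 `` T)"
    using finite_W2 M2_in by (blast intro: finite_subset)
  moreover have "card (M1 `` T) = card (M2 `` T)"
    using card_Image_matching[OF M1_matching dom(1)] card_Image_matching[OF M2_matching dom(2)]
    by simp
  ultimately show ?thesis
    using sub card_subset_eq by blast
qed

lemma woman_partners_M1_preferring_iff:
  "(u, w) \<in> M2 \<Longrightarrow> (v, w) \<in> M1 \<Longrightarrow> u \<in> T \<longleftrightarrow> v \<in> T"
  using M2_partner_M1_preferring M1_preferring_same_partners M1_woman_unique by blast

abbreviation D where "D \<equiv> diff_edges M1 M2"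

lemma diff_edge_man_partners_differ:
  "(u, x) \<in> D \<Longrightarrow> (u, w1) \<in> M1 \<Longrightarrow> (u, w2) \<in> M2 \<Longrightarrow> w1 \<noteq> w2"
  unfolding diff_edges_def using M1_man_unique M2_man_unique by blast

lemma diff_edge_woman_partners:
  "(x, w) \<in> D \<Longrightarrow> (u1, w) \<in> M1 \<Longrightarrow> (u2, w) \<in> M2 \<Longrightarrow> u1 \<noteq> u2 \<and> (x = u1 \<or> x = u2)"
  unfolding diff_edges_def using M1_woman_unique M2_woman_unique by blast

lemma card_diff_edges_man:
  assumes "(u, a) \<in> M1" "(u, b) \<in> M2" "a \<noteq> b"
  shows "card {w. (u, w) \<in> D} = 2"
proof -
  have "{w. (u, w) \<in> D} = {a, b}"
    using assms M1_man_unique M2_man_unique unfolding diff_edges_def by blast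
  then show ?thesis
    using assms(3) by simp
qed

lemma card_diff_edges_woman:
  assumes "(a, w) \<in> M1" "(b, w) \<in> M2" "a \<noteq> b"
  shows "card {u. (u, w) \<in> D} = 2"
proof -
  have "{u. (u, w) \<in> D} = {a, b}"
    using assms M1_woman_unique M2_woman_unique unfolding diff_edges_def by blast
  then show ?thesis
    using assms(3) by simp
qed

lemma edge_adj_M1_preferring_iff:
  assumes "(e, e') \<in> edge_adj D"
  shows "fst e \<in> T \<longleftrightarrow> fst e' \<in> T"
proof -
  obtain u w u' w' where e: "e = (u, w)" "e' = (u', w')"
    by fastforce
  have D: "(u, w) \<in> D" "(u', w') \<in> D" and "u = u' \<or> w = w'"
    using assms e unfolding edge_adj_def by auto
  show ?thesis
  proof (cases "u = u'")
    case False
    with \<open>u = u' \<or> w = w'\<close> have "w' = w" by blast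
    with D False have "(u, w) \<in> M2 \<and> (u', w) \<in> M1 \<or> (u, w) \<in> M1 \<and> (u', w) \<in> M2"
      using M1_woman_unique M2_woman_unique unfolding diff_edges_def by blast
    then show ?thesis
      using woman_partners_M1_preferring_iff e \<open>w' = w\<close> by auto
  qed (use e in simp)
qed

lemma component_M1_preferring_iff:
  assumes "e' \<in> component D e"
  shows "fst e' \<in> T \<longleftrightarrow> fst e \<in> T"
proof -
  have "(e, e') \<in> (edge_adj D)\<^sup>*"
    using assms unfolding component_def by blast
  then show ?thesis
    by (induction rule: rtrancl_induct) (use edge_adj_M1_preferring_iff in auto)
qed

lemma component_subset: "component D e \<subseteq> D"
  unfolding component_def by blast

lemma component_self: "e \<in> D \<Longrightarrow> e \<in> component D e"
  unfolding component_def by blast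

lemma component_typeI:
  assumes "fst e \<notin> T"
  shows "typeI PM PW M1 M2 (component D e)"
  unfolding typeI_def
proof (intro conjI ballI allI impI)
  fix u w1 w2
  assume "u \<in> fst ` component D e" "(u, w1) \<in> M1" "(u, w2) \<in> M2"
  then obtain x where x: "(u, x) \<in> component D e" by force
  then have "u \<notin> T"
    using component_M1_preferring_iff assms by fastforce
  moreover have "w1 \<noteq> w2"
    using diff_edge_man_partners_differ x component_subset \<open>(u, w1) \<in> M1\<close> \<open>(u, w2) \<in> M2\<close>
    by blast
  ultimately show "(w2, w1) \<in> PM u"
    using not_M1_preferring_prefers \<open>(u, w1) \<in> M1\<close> \<open>(u, w2) \<in> M2\<close> by blast
next
  fix w u1 u2
  assume "w \<in> snd ` component D e" and M: "(u1, w) \<in> M1" "(u2, w) \<in> M2"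
  then obtain x where x: "(x, w) \<in> component D e" by force
  then have "x \<notin> T"
    using component_M1_preferring_iff assms by fastforce
  moreover have "u1 \<noteq> u2 \<and> (x = u1 \<or> x = u2)"
    using diff_edge_woman_partners x component_subset M by blast
  ultimately show "(u1, u2) \<in> PW w"
    using woman_prefers_M1_partner_of_other woman_partners_M1_preferring_iff M by metis
qed

lemma component_typeII:
  assumes "fst e \<in> T"
  shows "typeII PM PW M1 M2 (component D e)"
  unfolding typeII_def
proof (intro conjI ballI allI impI)
  fix u w1 w2
  assume "u \<in> fst ` component D e" "(u, w1) \<in> M1" "(u, w2) \<in> M2"
  moreover from this have "u \<in> T"
    using component_M1_preferring_iff assms by fastforce
  ultimately show "(w1, w2) \<in> PM u"
    using M1_preferring_prefers by blast
next
  fix w u1 u2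
  assume "w \<in> snd ` component D e" and M: "(u1, w) \<in> M1" "(u2, w) \<in> M2"
  then obtain x where x: "(x, w) \<in> component D e" by force
  then have "x \<in> T"
    using component_M1_preferring_iff assms by fastforce
  moreover have "x = u1 \<or> x = u2"
    using diff_edge_woman_partners x component_subset M by blast
  ultimately have "u1 \<in> T"
    using woman_partners_M1_preferring_iff M by blast
  then show "(u2, u1) \<in> PW w"
    using woman_prefers_M2_partner_of_M1_preferring M by blast
qed

lemma component_cycle:
  assumes "fst e \<in> T"
  shows "is_cycle_comp D (component D e)"
  unfolding is_cycle_comp_def
proof (intro conjI ballI)
  fix u
  assume "u \<in> fst ` component D e"
  then have "u \<in> T"
    using component_M1_preferring_iff assms by fastforce
  then obtain a b where "(u, a) \<in> M1" "(u, b) \<in> M2"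
    unfolding M1_preferring_def by blast
  moreover from this have "a \<noteq> b"
    using M1_preferring_partners_differ \<open>u \<in> T\<close> by blast
  ultimately show "card {w. (u, w) \<in> D} = 2"
    by (rule card_diff_edges_man)
next
  fix w
  assume "w \<in> snd ` component D e"
  then obtain x where x: "(x, w) \<in> component D e" by force
  then have "x \<in> T"
    using component_M1_preferring_iff assms by fastforce
  moreover have "(x, w) \<in> M1 \<union> M2"
    using x component_subset unfolding diff_edges_def by blast
  ultimately have "w \<in> M1 `` T" "w \<in> M2 `` T"
    using M1_preferring_same_partners by blast+
  then obtain a b where "(a, w) \<in> M1" "(b, w) \<in> M2"
    by blast
  moreover from this have "a \<noteq> b"
    using diff_edge_woman_partners x component_subset by blast
  ultimately show "card {u. (u, w) \<in> D} = 2"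
    by (rule card_diff_edges_woman)
qed

lemma combine_eq_merge_on: "combine PM PW M1 M2 = merge_on T M1 M2"
proof -
  have "(u, w) \<in> combine PM PW M1 M2 \<longleftrightarrow> (u, w) \<in> merge_on T M1 M2" for u w
  proof -
    let ?C = "component D (u, w)"
    have C: "(u, w) \<in> D \<Longrightarrow> u \<in> fst ` ?C"
      using component_self by force
    consider "(u, w) \<in> M1 \<inter> M2" | "(u, w) \<in> M2 - M1" | "(u, w) \<in> M1 - M2"
      | "(u, w) \<notin> M1 \<union> M2"
      by blast
    then show ?thesis
    proof cases
      case 1
      then show ?thesis
        using M1_preferring_partners_differ
        unfolding combine_def Let_def merge_on_iff by blast
    next
      case 2
      then have "(u, w) \<in> D"
        unfolding diff_edges_def by blast
      have "\<not> typeI PM PW M1 M2 ?C" if "u \<in> T"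
      proof
        assume "typeI PM PW M1 M2 ?C"
        moreover obtain a where "(u, a) \<in> M1"
          using \<open>u \<in> T\<close> unfolding M1_preferring_def by blast
        ultimately have "(w, a) \<in> PM u"
          using 2 C[OF \<open>(u, w) \<in> D\<close>] unfolding typeI_def by blast
        then show False
          using M1_preferring_prefers[OF \<open>u \<in> T\<close> \<open>(u, a) \<in> M1\<close>] 2 PM_asym M2_in by blast
      qed
      then show ?thesis
        using 2 component_typeI[of "(u, w)"] component_cycle[of "(u, w)"]
        unfolding combine_def Let_def merge_on_iff by auto
    next
      case 3
      then have "(u, w) \<in> D"
        unfolding diff_edges_def by blast
      have "u \<in> T" if "typeII PM PW M1 M2 ?C"
      proof -
        obtain b where "(u, b) \<in> M2"
          using M2_man_matched M1_in 3 by blast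
        then show ?thesis
          using that 3 C[OF \<open>(u, w) \<in> D\<close>] M1_in
          unfolding typeII_def M1_preferring_def by blast
      qed
      then show ?thesis
        using 3 component_typeII[of "(u, w)"] component_cycle[of "(u, w)"]
        unfolding combine_def Let_def merge_on_iff by auto
    next
      case 4
      then show ?thesis
        unfolding combine_def Let_def merge_on_iff by blast
    qed
  qed
  then show ?thesis
    by auto
qed

lemma perfect_merge_on: "perfect_matching U W2 (merge_on T M1 M2)"
  by (rule perfect_matching_merge_on[OF M1_matching perfect2 M1_preferring_same_partners])
    (auto simp: M1_preferring_def)

lemma merge_on_partner_best:
  assumes "(u, r) \<in> merge_on T M1 M2" "(u, w) \<in> M1 \<union> M2"
  shows "w = r \<or> (r, w) \<in> PM u"
proof (cases "u \<in> T")
  case True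
  then have "(u, r) \<in> M1"
    using assms(1) unfolding merge_on_iff by blast
  then show ?thesis
    using assms(2) True M1_preferring_prefers M1_man_unique by blast
next
  case False
  then have "(u, r) \<in> M2"
    using assms(1) unfolding merge_on_iff by blast
  then show ?thesis
    using assms(2) False not_M1_preferring_prefers M2_man_unique by blast
qed

lemma stable_merge_on: "stable_matching PM PW U W2 (merge_on T M1 M2)"
  unfolding stable_matching_def
proof (intro conjI ballI)
  let ?M = "merge_on T M1 M2"
  show M: "is_matching U W2 ?M"
    using perfect_merge_on unfolding perfect_matching_def by blast
  fix u w
  assume "u \<in> U" "w \<in> W2"
  show "\<not> blocking_pair PM PW ?M u w"
  proof
    assume block: "blocking_pair PM PW ?M u w"
    obtain r u' where r: "(u, r) \<in> ?M" and u': "(u', w) \<in> ?M"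
      using perfect_merge_on \<open>u \<in> U\<close> \<open>w \<in> W2\<close> unfolding perfect_matching_def by blast
    have "(u, w) \<notin> ?M" and "(w, r) \<in> PM u" and w_pref: "(u, u') \<in> PW w"
      using block r u' is_matching_man_unique[OF M] is_matching_woman_unique[OF M]
      unfolding blocking_pair_def by blast+
    then have u_pref: "(w, x) \<in> PM u" if "(u, x) \<in> M1 \<union> M2" for x
      using merge_on_partner_best[OF r that] PM_trans \<open>u \<in> U\<close> by blast
    show False
    proof (cases "u' \<in> T")
      case False
      then have "(u', w) \<in> M2"
        using u' unfolding merge_on_iff by blast
      moreover obtain b where "(u, b) \<in> M2"
        using M2_man_matched \<open>u \<in> U\<close> by blast
      moreover have "(u, w) \<notin> M2"
        using \<open>(u, w) \<notin> ?M\<close> \<open>(u', w) \<in> M2\<close> u' M2_woman_unique by blast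
      ultimately have "blocking_pair PM PW M2 u w"
        using u_pref w_pref unfolding blocking_pair_def by blast
      then show False
        using not_blocking2 \<open>u \<in> U\<close> \<open>w \<in> W2\<close> by blast
    next
      case True
      then have "(u', w) \<in> M1"
        using u' unfolding merge_on_iff by blast
      moreover have "(u, w) \<notin> M1"
        using \<open>(u, w) \<notin> ?M\<close> \<open>(u', w) \<in> M1\<close> u' M1_woman_unique by blast
      ultimately have "blocking_pair PM PW M1 u w"
        using u_pref w_pref unfolding blocking_pair_def by blast
      then show False
        using not_blocking1 \<open>u \<in> U\<close> M1_in \<open>(u', w) \<in> M1\<close> by blast
    qed
  qed
qed

end

theorem lemma4:
  fixes U :: "'m set" and W1 W2 :: "'w set"
    and PM :: "'m \<Rightarrow> ('w \<times> 'w) set" and PW :: "'w \<Rightarrow> ('m \<times> 'm) set"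
    and M1 M2 :: "('m \<times> 'w) set"
  assumes "finite U" and "finite W2" and "W1 \<subseteq> W2"
    and "card W1 \<le> card W2" and "card W2 = card U"
    and "\<And>u. u \<in> U \<Longrightarrow> strict_linear_order_on W2 (PM u) \<and> PM u \<subseteq> W2 \<times> W2"
    and "\<And>w. w \<in> W2 \<Longrightarrow> strict_linear_order_on U (PW w) \<and> PW w \<subseteq> U \<times> U"
    and "stable_matching PM PW U W1 M1"
    and "stable_matching PM PW U W2 M2"
  shows "perfect_matching U W2 (combine PM PW M1 M2)
       \<and> stable_matching PM PW U W2 (combine PM PW M1 M2)"
proof -
  have "perfect_matching U W2 M2"
    using stable_matching_perfect assms(1,2,5,9) by blast
  then interpret two_stable_matchings U W1 W2 PM PW M1 M2
    using assms by unfold_locales auto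
  show ?thesis
    using combine_eq_merge_on perfect_merge_on stable_merge_on by simp
qed

end
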